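(* Let $\mathrm{int}(\Delta^n):=\{\mathbf{p}\in\Delta^n:p_i>0\ \forall i\}$. Each of the following proper scoring rules on the forecast domain $\mathcal{D}=\mathrm{int}(\Delta^n)$ has convex exposure: (i) the logarithmic scoring rule $s(\mathbf{p};j)=\ln p_j$ (with $G(\mathbf{p})=\sum_j p_j\ln p_j$); (ii) the scoring rule with $G(\mathbf{p})=-\sum_j p_j^{\gamma}$ for $\gamma\in(0,1)$, and the scoring rule with $G(\mathbf{p})=\sum_j p_j^{\gamma}$ for $\gamma<0$; (iii) the scoring rule with $G(\mathbf{p})=-\sum_j\ln p_j$; (iv) the scoring rule with $G(\mathbf{p})=-\prod_j p_j^{1/n}$.
   Context: A scoring rule "given by" a differentiable strictly convex $G$ on $\mathcal{D}$ is $s(\mathbf{p};j)=G(\mathbf{p})+\langle\nabla G(\mathbf{p}),\delta_j-\mathbf{p}\rangle$, where $\delta_j$ is the $j$-th standard basis vector; this is a proper scoring rule with expected reward function $G$. The exposure function is $\mathbf{g}=\nabla G$, with values understood modulo translation by the all-ones vector (equivalently, projected onto $\{\mathbf{x}:\sum_i x_i=0\}$). A scoring rule has convex exposure if the range of $\mathbf{g}$ is a convex set. *)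

theory Defs
  imports "HOL-Analysis.Analysis"
begin

definition int_simplex :: "(real^'n) set" where
  "int_simplex = {p. (\<forall>i. 0 < p $ i) \<and> (\<Sum>i\<in>UNIV. p $ i) = 1}"

definition sr_gradient :: "(real^'n \<Rightarrow> real) \<Rightarrow> real^'n \<Rightarrow> real^'n" where
  "sr_gradient G p = (\<chi> i. frechet_derivative G (at p) (axis i 1))"

text \<open>Exposure function g = grad G, projected onto the hyperplane sum x_i = 0
  (i.e. taken modulo translation by the all-ones vector).\<close>
definition exposure :: "(real^'n \<Rightarrow> real) \<Rightarrow> real^'n \<Rightarrow> real^'n" where
  "exposure G p = sr_gradient G p
     - ((\<Sum>i\<in>UNIV. sr_gradient G p $ i) / real CARD('n)) *\<^sub>R (\<chi> i. 1)"

definition convex_exposure :: "(real^'n) set \<Rightarrow> (real^'n \<Rightarrow> real) \<Rightarrow> bool" where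
  "convex_exposure D G \<longleftrightarrow> convex (exposure G ` D)"

end

theory Submission
  imports Defs
begin

text \<open>The exposure always lies in the hyperplane \<open>H = {x. \<Sum>i. x\<^sub>i = 0}\<close>, so it is enough to
  show that it is onto \<open>H\<close>: every \<open>x \<in> H\<close> must be the gradient of \<open>G\<close> at some interior point,
  up to adding a constant vector. For a separable \<open>G(p) = \<Sum>\<^sub>j f(p\<^sub>j)\<close> the gradient is
  \<open>(f'(p\<^sub>j))\<^sub>j\<close>, so one solves \<open>f'(p\<^sub>j) = x\<^sub>j + c\<close> coordinatewise and tunes the shift \<open>c\<close>
  (explicitly for the logarithmic rule, by the intermediate value theorem when \<open>f'\<close> is a
  negative power) until the solution sums to 1. The geometric mean is homogeneous of degree 1,
  so its gradient is invariant under scaling: there one finds an unnormalised point with the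
  right gradient, again by the intermediate value theorem, and normalises it.\<close>

lemma sr_gradient_eqI:
  fixes G :: "real^'n \<Rightarrow> real"
  assumes "(G has_derivative (\<lambda>h. \<Sum>j\<in>UNIV. d $ j * h $ j)) (at p)"
  shows "sr_gradient G p = d"
proof -
  have "frechet_derivative G (at p) = (\<lambda>h. \<Sum>j\<in>UNIV. d $ j * h $ j)"
    using frechet_derivative_at[OF assms] by simp
  then show ?thesis
    unfolding sr_gradient_def by (simp add: vec_eq_iff axis_def if_distrib cong: if_cong)
qed

lemma sum_exposure_eq_0: "(\<Sum>i\<in>UNIV. exposure G p $ i) = 0"
  unfolding exposure_def by (simp add: sum_subtractf)

lemma exposure_eqI:
  fixes x :: "real^'n"
  assumes "sr_gradient G p = (\<chi> j. x $ j + c)" and "(\<Sum>j\<in>UNIV. x $ j) = 0"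
  shows "exposure G p = x"
  using assms unfolding exposure_def by (simp add: vec_eq_iff sum.distrib)

lemma convex_sum_eq_0: "convex {x::real^'n. (\<Sum>i\<in>UNIV. x $ i) = 0}"
  unfolding convex_def by (simp add: sum.distrib flip: sum_distrib_left)

lemma convex_exposureI:
  fixes G :: "real^'n \<Rightarrow> real"
  assumes "\<And>x::real^'n. (\<Sum>j\<in>UNIV. x $ j) = 0 \<Longrightarrow> \<exists>p\<in>D. \<exists>c. sr_gradient G p = (\<chi> j. x $ j + c)"
  shows "convex_exposure D G"
proof -
  have "exposure G ` D = {x. (\<Sum>i\<in>UNIV. x $ i) = 0}"
  proof
    show "exposure G ` D \<subseteq> {x. (\<Sum>i\<in>UNIV. x $ i) = 0}"
      using sum_exposure_eq_0 by blast
    show "{x. (\<Sum>i\<in>UNIV. x $ i) = 0} \<subseteq> exposure G ` D"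
    proof
      fix x :: "real^'n"
      assume "x \<in> {x. (\<Sum>i\<in>UNIV. x $ i) = 0}"
      then have x: "(\<Sum>i\<in>UNIV. x $ i) = 0" by simp
      then obtain p c where "p \<in> D" "sr_gradient G p = (\<chi> j. x $ j + c)"
        using assms by blast
      with exposure_eqI[OF _ x] show "x \<in> exposure G ` D" by (metis image_eqI)
    qed
  qed
  then show ?thesis
    unfolding convex_exposure_def using convex_sum_eq_0 by simp
qed

lemma has_derivative_vec_nth_comp:
  fixes p :: "real^'n"
  assumes "(f has_real_derivative D) (at (p $ j))"
  shows "((\<lambda>q::real^'n. f (q $ j)) has_derivative (\<lambda>h. D * h $ j)) (at p)"
proof -
  have "((\<lambda>q::real^'n. q $ j) has_derivative (\<lambda>h. h $ j)) (at p)"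
    by (rule bounded_linear_imp_has_derivative) (rule bounded_linear_vec_nth)
  moreover have "(f has_derivative (\<lambda>u. D * u)) (at ((\<lambda>q::real^'n. q $ j) p))"
    using assms by (simp add: has_field_derivative_def)
  ultimately show ?thesis
    using diff_chain_at by (fastforce simp: o_def)
qed

lemma sr_gradient_sum_vec_nth:
  fixes p :: "real^'n"
  assumes "\<And>j. (f has_real_derivative f' (p $ j)) (at (p $ j))"
  shows "sr_gradient (\<lambda>q::real^'n. \<Sum>j\<in>UNIV. f (q $ j)) p = (\<chi> j. f' (p $ j))"
  by (rule sr_gradient_eqI)
     (simp add: has_derivative_sum has_derivative_vec_nth_comp[OF assms])

lemma int_simplexI:
  assumes "\<And>j. 0 < p $ j" and "(\<Sum>j\<in>UNIV. p $ j) = 1"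
  shows "p \<in> int_simplex"
  using assms unfolding int_simplex_def by auto

lemma int_simplex_pos: "p \<in> int_simplex \<Longrightarrow> 0 < p $ j"
  unfolding int_simplex_def by auto

lemma convex_exposure_separable:
  fixes f \<phi> :: "real \<Rightarrow> real"
  assumes deriv: "\<And>t. 0 < t \<Longrightarrow> (f has_real_derivative \<phi> t) (at t)"
    and solvable: "\<And>x::real^'n. (\<Sum>j\<in>UNIV. x $ j) = 0 \<Longrightarrow>
      \<exists>p\<in>int_simplex. \<exists>c. \<forall>j. \<phi> (p $ j) = x $ j + c"
  shows "convex_exposure int_simplex (\<lambda>p::real^'n. \<Sum>j\<in>UNIV. f (p $ j))"
proof (rule convex_exposureI)
  fix x :: "real^'n"
  assume "(\<Sum>j\<in>UNIV. x $ j) = 0"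
  then obtain p c where p: "p \<in> int_simplex" and c: "\<And>j. \<phi> (p $ j) = x $ j + c"
    using solvable by blast
  have "sr_gradient (\<lambda>p. \<Sum>j\<in>UNIV. f (p $ j)) p = (\<chi> j. \<phi> (p $ j))"
    by (intro sr_gradient_sum_vec_nth deriv int_simplex_pos[OF p])
  with p c show "\<exists>p\<in>int_simplex. \<exists>c. sr_gradient (\<lambda>p. \<Sum>j\<in>UNIV. f (p $ j)) p = (\<chi> j. x $ j + c)"
    by auto
qed

lemma convex_exposure_log_score:
  "convex_exposure int_simplex (\<lambda>p::real^'n. \<Sum>j\<in>UNIV. p $ j * ln (p $ j))"
proof (rule convex_exposure_separable)
  show "((\<lambda>t. t * ln t) has_real_derivative ln t + 1) (at t)" if "0 < t" for t :: real
    using that by (auto intro!: derivative_eq_intros)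
  fix x :: "real^'n"
  define Z where "Z = (\<Sum>j\<in>UNIV. exp (x $ j))"
  have Z: "0 < Z"
    unfolding Z_def by (intro sum_pos) auto
  define p :: "real^'n" where "p = (\<chi> j. exp (x $ j) / Z)"
  have "p \<in> int_simplex"
    using Z by (intro int_simplexI) (simp_all add: p_def Z_def flip: sum_divide_distrib)
  moreover have "ln (p $ j) + 1 = x $ j + (1 - ln Z)" for j
    using Z by (simp add: p_def ln_div)
  ultimately show "\<exists>p\<in>int_simplex. \<exists>c. \<forall>j. ln (p $ j) + 1 = x $ j + c"
    by blast
qed

lemma exists_max_vec_nth:
  fixes x :: "'a::linorder^'n"
  obtains j0 where "\<And>j. x $ j \<le> x $ j0"
proof -
  have "Max (range (\<lambda>j. x $ j)) \<in> range (\<lambda>j. x $ j)"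
    by (rule Max_in) auto
  then obtain j0 where j0: "x $ j0 = Max (range (\<lambda>j. x $ j))" by (metis imageE)
  have "x $ j \<le> x $ j0" for j
    unfolding j0 by (simp add: Max_ge)
  then show ?thesis
    by (rule that)
qed

lemma exists_shift_sum_powr_eq_1:
  fixes x :: "real^'n" and k r :: real
  assumes k: "0 < k" and r: "0 < r"
  shows "\<exists>c. (\<forall>j. x $ j < c) \<and> (\<Sum>j\<in>UNIV. ((c - x $ j) / k) powr (- r)) = 1"
proof -
  obtain j0 where max: "\<And>j. x $ j \<le> x $ j0"
    using exists_max_vec_nth by blast
  define n where "n = real CARD('n)"
  have n: "1 \<le> n"
    unfolding n_def by (simp add: Suc_le_eq)
  define S where "S c = (\<Sum>j\<in>UNIV. ((c - x $ j) / k) powr (- r))" for c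
  define a where "a = x $ j0 + k"
  define b where "b = x $ j0 + k * n powr (1 / r)"
  have n_powr: "1 \<le> n powr (1 / r)"
    using n r by (simp add: ge_one_powr_ge_zero)
  have "a \<le> b"
    unfolding a_def b_def using n_powr k by simp
  moreover have "1 \<le> S a"
  proof -
    have "1 = ((a - x $ j0) / k) powr (- r)"
      using k unfolding a_def by simp
    also have "\<dots> \<le> S a"
      unfolding S_def by (rule member_le_sum) auto
    finally show ?thesis .
  qed
  moreover have "S b \<le> 1"
  proof -
    have "((b - x $ j) / k) powr (- r) \<le> 1 / n" for j
    proof -
      have "n powr (1 / r) \<le> (b - x $ j) / k"
        using max[of j] k unfolding b_def by (simp add: field_simps)
      then have "((b - x $ j) / k) powr (- r) \<le> (n powr (1 / r)) powr (- r)"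
        using n_powr r by (intro powr_mono2') auto
      also have "\<dots> = 1 / n"
        using r n by (simp add: powr_powr powr_minus_divide)
      finally show ?thesis .
    qed
    then have "S b \<le> (\<Sum>j\<in>(UNIV::'n set). 1 / n)"
      unfolding S_def by (intro sum_mono) auto
    also have "\<dots> = 1"
      unfolding n_def by simp
    finally show ?thesis .
  qed
  moreover have "\<forall>c. a \<le> c \<and> c \<le> b \<longrightarrow> isCont S c"
  proof (intro allI impI)
    fix c
    assume "a \<le> c \<and> c \<le> b"
    then have "x $ j < c" for j
      using max[of j] k unfolding a_def by linarith
    then show "isCont S c"
      unfolding S_def using k by (intro continuous_intros) auto
  qed
  ultimately obtain c where c: "a \<le> c" "S c = 1"
    using IVT2[of S b 1 a] by blast
  have "x $ j < c" for j
    using max[of j] k c(1) unfolding a_def by linarith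
  with c(2) show ?thesis
    unfolding S_def by blast
qed

text \<open>The witness inverts \<open>f'\<close>: \<open>p\<^sub>j = ((c - x\<^sub>j) / k)\<^sup>-\<^sup>1\<^sup>/\<^sup>s\<close>.\<close>
lemma convex_exposure_separable_powr:
  fixes f :: "real \<Rightarrow> real" and k s :: real
  assumes k: "0 < k" and s: "0 < s"
    and deriv: "\<And>t. 0 < t \<Longrightarrow> (f has_real_derivative - k * t powr (- s)) (at t)"
  shows "convex_exposure int_simplex (\<lambda>p::real^'n. \<Sum>j\<in>UNIV. f (p $ j))"
proof (rule convex_exposure_separable[OF deriv])
  fix x :: "real^'n"
  obtain c where c: "\<And>j. x $ j < c" and sum: "(\<Sum>j\<in>UNIV. ((c - x $ j) / k) powr (- (1 / s))) = 1"
    using exists_shift_sum_powr_eq_1[OF k, of "1 / s" x] s by auto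
  define p :: "real^'n" where "p = (\<chi> j. ((c - x $ j) / k) powr (- (1 / s)))"
  have "0 < p $ j" for j
    using c[of j] k by (simp add: p_def)
  then have "p \<in> int_simplex"
    using sum by (intro int_simplexI) (simp_all add: p_def)
  moreover have "- k * (p $ j) powr (- s) = x $ j + (- c)" for j
    using c[of j] k s by (simp add: p_def powr_powr)
  ultimately show "\<exists>p\<in>int_simplex. \<exists>c. \<forall>j. - k * (p $ j) powr (- s) = x $ j + c"
    by blast
qed

lemma convex_exposure_neg_sum_powr:
  fixes \<gamma> :: real
  assumes "0 < \<gamma>" and "\<gamma> < 1"
  shows "convex_exposure int_simplex (\<lambda>p::real^'n. - (\<Sum>j\<in>UNIV. p $ j powr \<gamma>))"
proof -
  have "((\<lambda>t. - (t powr \<gamma>)) has_real_derivative - \<gamma> * t powr (- (1 - \<gamma>))) (at t)" if "0 < t" for t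
    using has_real_derivative_powr[OF that, of \<gamma>] that by (auto intro!: derivative_eq_intros)
  from convex_exposure_separable_powr[OF _ _ this] assms show ?thesis
    by (simp add: sum_negf)
qed

lemma convex_exposure_sum_powr_neg:
  fixes \<gamma> :: real
  assumes "\<gamma> < 0"
  shows "convex_exposure int_simplex (\<lambda>p::real^'n. \<Sum>j\<in>UNIV. p $ j powr \<gamma>)"
proof -
  have "((\<lambda>t. t powr \<gamma>) has_real_derivative - (- \<gamma>) * t powr (- (1 - \<gamma>))) (at t)" if "0 < t" for t
    using has_real_derivative_powr[OF that, of \<gamma>] by simp
  from convex_exposure_separable_powr[OF _ _ this] assms show ?thesis
    by simp
qed

lemma convex_exposure_neg_sum_ln:
  "convex_exposure int_simplex (\<lambda>p::real^'n. - (\<Sum>j\<in>UNIV. ln (p $ j)))"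
proof -
  have "((\<lambda>t. - ln t) has_real_derivative - 1 * t powr (- 1)) (at t)" if "0 < t" for t :: real
    using that by (auto intro!: derivative_eq_intros simp: powr_minus_divide)
  from convex_exposure_separable_powr[OF _ _ this] show ?thesis
    by (simp add: sum_negf)
qed

lemma exists_shift_prod_eq:
  fixes x :: "real^'n" and T :: real
  assumes T: "0 < T"
  shows "\<exists>c. (\<forall>j. x $ j < c) \<and> (\<Prod>j\<in>UNIV. c - x $ j) = T"
proof -
  obtain j0 where max: "\<And>j. x $ j \<le> x $ j0"
    using exists_max_vec_nth by blast
  define h where "h c = (\<Prod>j\<in>UNIV. c - x $ j)" for c
  define b where "b = x $ j0 + T + 1"
  have "h (x $ j0) = 0"
    unfolding h_def by (rule prod_zero) auto
  then have "h (x $ j0) \<le> T"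
    using T by simp
  moreover have "T \<le> h b"
  proof -
    have "T \<le> (T + 1) ^ CARD('n)"
      using T self_le_power[of "T + 1" "CARD('n)"] by simp
    also have "\<dots> = (\<Prod>j\<in>(UNIV::'n set). T + 1)"
      by simp
    also have "\<dots> \<le> h b"
      unfolding h_def b_def by (intro prod_mono conjI) (use max T in \<open>force+\<close>)
    finally show ?thesis .
  qed
  moreover have "x $ j0 \<le> b"
    unfolding b_def using T by simp
  moreover have "\<forall>c. x $ j0 \<le> c \<and> c \<le> b \<longrightarrow> isCont h c"
    unfolding h_def by (intro allI impI continuous_intros)
  ultimately obtain c where c: "x $ j0 \<le> c" "h c = T"
    using IVT[of h "x $ j0" T b] by blast
  have "x $ j < c" for j
  proof -
    have "(\<Prod>j\<in>UNIV. c - x $ j) \<noteq> 0"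
      using c(2) T unfolding h_def by simp
    then have "x $ j \<noteq> c"
      using prod_zero[of UNIV "\<lambda>j. c - x $ j"] by auto
    with max[of j] c(1) show ?thesis by linarith
  qed
  with c(2) show ?thesis
    unfolding h_def by blast
qed

lemma sr_gradient_neg_prod_powr:
  fixes p :: "real^'n" and e :: real
  assumes pos: "\<And>j. 0 < p $ j"
  shows "sr_gradient (\<lambda>q::real^'n. - (\<Prod>j\<in>UNIV. q $ j powr e)) p
    = (\<chi> i. - e * (\<Prod>j\<in>UNIV. p $ j powr e) / p $ i)"
proof (rule sr_gradient_eqI)
  define P where "P = (\<Prod>j\<in>UNIV. p $ j powr e)"
  have "((\<lambda>q::real^'n. q $ j powr e) has_derivative (\<lambda>h. e * p $ j powr (e - 1) * h $ j)) (at p)" for j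
    by (rule has_derivative_vec_nth_comp) (rule has_real_derivative_powr[OF pos])
  then have "((\<lambda>q::real^'n. - (\<Prod>j\<in>UNIV. q $ j powr e)) has_derivative
      (\<lambda>h. - (\<Sum>i\<in>UNIV. e * p $ i powr (e - 1) * h $ i * (\<Prod>j\<in>UNIV - {i}. p $ j powr e)))) (at p)"
    by (intro has_derivative_minus has_derivative_prod)
  moreover have "e * p $ i powr (e - 1) * h $ i * (\<Prod>j\<in>UNIV - {i}. p $ j powr e)
      = - ((\<chi> i. - e * P / p $ i) $ i * h $ i)" for i h
  proof -
    have "P = p $ i powr e * (\<Prod>j\<in>UNIV - {i}. p $ j powr e)"
      unfolding P_def by (simp add: prod.remove)
    moreover have "p $ i powr (e - 1) = p $ i powr e / p $ i"
      using pos[of i] by (simp add: powr_diff)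
    ultimately show ?thesis
      using pos[of i] by (simp add: field_simps)
  qed
  ultimately show "((\<lambda>q::real^'n. - (\<Prod>j\<in>UNIV. q $ j powr e)) has_derivative
      (\<lambda>h. \<Sum>j\<in>UNIV. (\<chi> i. - e * (\<Prod>j\<in>UNIV. p $ j powr e) / p $ i) $ j * h $ j)) (at p)"
    unfolding P_def by (simp add: sum_negf)
qed

text \<open>The geometric mean is homogeneous of degree 1, so only the direction of \<open>p\<close> matters:
  with \<open>d\<^sub>j = c - x\<^sub>j\<close> and \<open>\<Prod>\<^sub>j d\<^sub>j = n\<^sup>-\<^sup>n\<close>, the point \<open>p \<propto> (1 / d\<^sub>j)\<^sub>j\<close> has gradient \<open>(-d\<^sub>j)\<^sub>j\<close>.\<close>
lemma convex_exposure_neg_geometric_mean: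
  "convex_exposure int_simplex (\<lambda>p::real^'n. - (\<Prod>j\<in>UNIV. p $ j powr (1 / real CARD('n))))"
proof (rule convex_exposureI)
  fix x :: "real^'n"
  define n where "n = real CARD('n)"
  have n: "0 < n"
    unfolding n_def by simp
  obtain c where c: "\<And>j. x $ j < c" and prod: "(\<Prod>j\<in>UNIV. c - x $ j) = 1 / n ^ CARD('n)"
    using exists_shift_prod_eq[of "1 / n ^ CARD('n)" x] n by auto
  define S where "S = (\<Sum>j\<in>UNIV. 1 / (c - x $ j))"
  have S: "0 < S"
    unfolding S_def using c by (intro sum_pos) auto
  define p :: "real^'n" where "p = (\<chi> j. (1 / (c - x $ j)) / S)"
  have pos: "0 < p $ j" for j
    unfolding p_def using S c[of j] by simp
  have "(\<Sum>j\<in>UNIV. p $ j) = S / S"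
    by (simp only: p_def vec_lambda_beta flip: sum_divide_distrib S_def)
  with pos S have "p \<in> int_simplex"
    by (intro int_simplexI) simp_all
  have "(\<Prod>j\<in>UNIV. p $ j) = (n / S) ^ CARD('n)"
    using prod n by (simp add: p_def prod_dividef prod.distrib power_divide)
  then have P: "(\<Prod>j\<in>UNIV. p $ j powr (1 / n)) = n / S"
    using n S by (simp add: flip: prod_powr_distrib powr_realpow add: powr_powr n_def)
  have "sr_gradient (\<lambda>p::real^'n. - (\<Prod>j\<in>UNIV. p $ j powr (1 / real CARD('n)))) p
      = (\<chi> i. - (1 / n) * (\<Prod>j\<in>UNIV. p $ j powr (1 / n)) / p $ i)"
    using sr_gradient_neg_prod_powr[OF pos] unfolding n_def by simp
  also have "\<dots> = (\<chi> j. x $ j + (- c))"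
    unfolding P using n S c by (simp add: vec_eq_iff p_def field_simps)
  finally show "\<exists>p\<in>int_simplex. \<exists>c. sr_gradient (\<lambda>p::real^'n.
      - (\<Prod>j\<in>UNIV. p $ j powr (1 / real CARD('n)))) p = (\<chi> j. x $ j + c)"
    using \<open>p \<in> int_simplex\<close> by blast
qed

theorem corollaryF2:
  shows "convex_exposure (int_simplex :: (real^'n) set) (\<lambda>p. \<Sum>j\<in>UNIV. p $ j * ln (p $ j))
    \<and> (\<forall>\<gamma>::real. 0 < \<gamma> \<and> \<gamma> < 1 \<longrightarrow>
         convex_exposure (int_simplex :: (real^'n) set) (\<lambda>p. - (\<Sum>j\<in>UNIV. p $ j powr \<gamma>)))
    \<and> (\<forall>\<gamma>::real. \<gamma> < 0 \<longrightarrow>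
         convex_exposure (int_simplex :: (real^'n) set) (\<lambda>p. \<Sum>j\<in>UNIV. p $ j powr \<gamma>))
    \<and> convex_exposure (int_simplex :: (real^'n) set) (\<lambda>p. - (\<Sum>j\<in>UNIV. ln (p $ j)))
    \<and> convex_exposure (int_simplex :: (real^'n) set)
         (\<lambda>p. - (\<Prod>j\<in>UNIV. p $ j powr (1 / real CARD('n))))"
  using convex_exposure_log_score convex_exposure_neg_sum_powr convex_exposure_sum_powr_neg
    convex_exposure_neg_sum_ln convex_exposure_neg_geometric_mean
  by blast

end
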